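(* Let $M$ be a left-quotient of $\widetilde{\mathrm{SL}}_2$ with fundamental group $\pi$ presented as below, and let $\rho,\rho'\in\mathcal R(\pi,\widetilde{\mathrm{SL}}_2)$ satisfy $\mathrm{pr}\circ\rho=\mathrm{pr}\circ\rho'$. Then $\rho(h)=\rho'(h)$ and $\rho(q_j)=\rho'(q_j)$ for $j=1,\dots,n$.
   Context: $\mathrm{pr}\colon\widetilde{\mathrm{SL}}_2\to\mathrm{PSL}_2\mathbb R$ is the universal covering. $M$ has normalised Seifert invariants $\{g,b,(\alpha_1,\beta_1),\dots,(\alpha_n,\beta_n)\}$ with Euler number $e=-(b+\sum_j\beta_j/\alpha_j)\neq0$, and $\pi=\langle u_1,v_1,\dots,u_g,v_g,q_1,\dots,q_n,h\mid\prod_i[u_i,v_i]\prod_jq_j=h^b,\ q_j^{\alpha_j}h^{\beta_j}=1,\ h\text{ central}\rangle$. $\mathcal R(\pi,\widetilde{\mathrm{SL}}_2)$ is the set of faithful homomorphisms $\pi\to\widetilde{\mathrm{SL}}_2$ with discrete cocompact image. *)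

theory Defs
  imports "HOL-Analysis.Analysis" "HOL-Algebra.Group"
begin

text \<open>Model: an element of the universal cover is a continuous lift f = id + phi
  to the real line (angles) of the action of a matrix A in SL(2,R) on the circle
  of directions S^1 = R / 2 pi Z, i.e. A (cos t, sin t) is a positive multiple of
  (cos (f t), sin (f t)).  The displacement phi = f - id is 2 pi periodic, hence a
  bounded continuous function, and we store phi.  The group law is composition
  of lifts; the topology is the uniform (sup) metric of bcontfun, which is the Lie
  group topology.\<close>

definition lifts_mat :: "real^2^2 \<Rightarrow> (real \<Rightarrow>\<^sub>C real) \<Rightarrow> bool" where
  "lifts_mat A phi \<longleftrightarrow> det A = 1 \<and>
     (\<forall>t. \<exists>r>0. A *v vector [cos t, sin t] =
               r *\<^sub>R vector [cos (t + apply_bcontfun phi t), sin (t + apply_bcontfun phi t)])"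

definition SL2t_carrier :: "(real \<Rightarrow>\<^sub>C real) set" where
  "SL2t_carrier = {phi. \<exists>A. lifts_mat A phi}"

definition SL2t_mult :: "(real \<Rightarrow>\<^sub>C real) \<Rightarrow> (real \<Rightarrow>\<^sub>C real) \<Rightarrow> (real \<Rightarrow>\<^sub>C real)" where
  "SL2t_mult phi psi =
     Bcontfun (\<lambda>t. apply_bcontfun psi t + apply_bcontfun phi (t + apply_bcontfun psi t))"

definition SL2t :: "(real \<Rightarrow>\<^sub>C real) monoid" where
  "SL2t = \<lparr>carrier = SL2t_carrier, mult = SL2t_mult, one = 0\<rparr>"

text \<open>PSL(2,R) = SL(2,R)/{+-1}; an element is represented as the pair {A, -A}.\<close>
definition pr :: "(real \<Rightarrow>\<^sub>C real) \<Rightarrow> (real^2^2) set" where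
  "pr phi = {A. \<exists>B. lifts_mat B phi \<and> (A = B \<or> A = - B)}"

definition cocompact_SL2t :: "(real \<Rightarrow>\<^sub>C real) set \<Rightarrow> bool" where
  "cocompact_SL2t \<Gamma> \<longleftrightarrow> (\<exists>K. compact K \<and> K \<subseteq> carrier SL2t \<and>
       carrier SL2t \<subseteq> (\<Union>\<gamma>\<in>\<Gamma>. (\<lambda>k. \<gamma> \<otimes>\<^bsub>SL2t\<^esub> k) ` K))"

definition Rep_dc :: "('g, 'm) monoid_scheme \<Rightarrow> ('g \<Rightarrow> (real \<Rightarrow>\<^sub>C real)) set" where
  "Rep_dc G = {\<rho>. \<rho> \<in> hom G SL2t \<and> inj_on \<rho> (carrier G) \<and>
       discrete (\<rho> ` carrier G) \<and> cocompact_SL2t (\<rho> ` carrier G)}"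

datatype sgen = U nat | V nat | Q nat | H

type_synonym sword = "(sgen \<times> bool) list"  \<comment> \<open>True = generator, False = its inverse\<close>

definition seif_gens :: "nat \<Rightarrow> nat \<Rightarrow> sgen set" where
  "seif_gens g n = {U i |i. 1 \<le> i \<and> i \<le> g} \<union> {V i |i. 1 \<le> i \<and> i \<le> g}
                    \<union> {Q j |j. 1 \<le> j \<and> j \<le> n} \<union> {H}"

definition hpow :: "int \<Rightarrow> sword" where
  "hpow k = (if k \<ge> 0 then replicate (nat k) (H, True) else replicate (nat (- k)) (H, False))"

definition comm_word :: "sgen \<Rightarrow> sgen \<Rightarrow> sword" where
  "comm_word a c = [(a, True), (c, True), (a, False), (c, False)]"

text \<open>Relators of
  pi = < u_i, v_i, q_j, h | prod_i [u_i,v_i] prod_j q_j = h^b, q_j^alpha_j h^beta_j = 1, h central >.\<close>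
definition seif_relators :: "nat \<Rightarrow> int \<Rightarrow> nat \<Rightarrow> (nat \<Rightarrow> int) \<Rightarrow> (nat \<Rightarrow> int) \<Rightarrow> sword set" where
  "seif_relators g b n \<alpha> \<beta> =
     {concat (map (\<lambda>i. comm_word (U i) (V i)) [1..<g+1]) @ map (\<lambda>j. (Q j, True)) [1..<n+1] @ hpow (- b)}
     \<union> {replicate (nat (\<alpha> j)) (Q j, True) @ hpow (\<beta> j) |j. 1 \<le> j \<and> j \<le> n}
     \<union> {comm_word H a |a. a \<in> seif_gens g n}"

text \<open>The congruence on words generated by free cancellation and the relators
  (i.e. equality in the free group modulo the normal closure of the relators).\<close>
inductive word_eqv :: "'a set \<Rightarrow> ('a \<times> bool) list set \<Rightarrow> ('a \<times> bool) list \<Rightarrow> ('a \<times> bool) list \<Rightarrow> bool"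
  for S :: "'a set" and R :: "('a \<times> bool) list set" where
  refl: "word_eqv S R w w"
| sym: "word_eqv S R w w' \<Longrightarrow> word_eqv S R w' w"
| trans: "word_eqv S R w w' \<Longrightarrow> word_eqv S R w' w'' \<Longrightarrow> word_eqv S R w w''"
| cancel: "a \<in> S \<Longrightarrow> word_eqv S R (u @ [(a, s), (a, \<not> s)] @ v) (u @ v)"
| rel: "r \<in> R \<Longrightarrow> word_eqv S R (u @ r @ v) (u @ v)"

definition eval_word :: "('g, 'm) monoid_scheme \<Rightarrow> ('a \<Rightarrow> 'g) \<Rightarrow> ('a \<times> bool) list \<Rightarrow> 'g" where
  "eval_word G x w = foldr (\<lambda>(a, s) acc. (if s then x a else inv\<^bsub>G\<^esub> (x a)) \<otimes>\<^bsub>G\<^esub> acc) w \<one>\<^bsub>G\<^esub>"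

definition presented_by :: "('g, 'm) monoid_scheme \<Rightarrow> 'a set \<Rightarrow> ('a \<times> bool) list set \<Rightarrow> ('a \<Rightarrow> 'g) \<Rightarrow> bool" where
  "presented_by G S R x \<longleftrightarrow> group G \<and> x ` S \<subseteq> carrier G \<and>
     eval_word G x ` lists (S \<times> UNIV) = carrier G \<and>
     (\<forall>w\<in>lists (S \<times> UNIV). \<forall>w'\<in>lists (S \<times> UNIV).
        eval_word G x w = eval_word G x w' \<longleftrightarrow> word_eqv S R w w')"

definition normalised_seifert :: "nat \<Rightarrow> (nat \<Rightarrow> int) \<Rightarrow> (nat \<Rightarrow> int) \<Rightarrow> bool" where
  "normalised_seifert n \<alpha> \<beta> \<longleftrightarrow>
     (\<forall>j. 1 \<le> j \<and> j \<le> n \<longrightarrow> 0 < \<beta> j \<and> \<beta> j < \<alpha> j \<and> coprime (\<alpha> j) (\<beta> j))"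

definition euler_number :: "int \<Rightarrow> nat \<Rightarrow> (nat \<Rightarrow> int) \<Rightarrow> (nat \<Rightarrow> int) \<Rightarrow> real" where
  "euler_number b n \<alpha> \<beta> = - (of_int b + (\<Sum>j=1..n. of_int (\<beta> j) / of_int (\<alpha> j)))"

end

theory Submission
  imports Defs
begin

text \<open>If \<open>pr \<circ> \<rho> = pr \<circ> \<rho>'\<close>, then for each \<open>y\<close> the lifts \<open>\<rho> y\<close> and \<open>\<rho>' y\<close> cover the same
  projective transformation, so they differ by a deck transformation, a translation by
  \<open>k(y) \<pi>\<close> with \<open>k(y) \<in> \<int>\<close>.  Since the displacement of a lift is \<open>\<pi>\<close>-periodic, \<open>k\<close> is a
  homomorphism \<open>\<pi> \<rightarrow> \<int>\<close>.  On the relators it gives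
  \<open>\<Sum>\<^sub>j k(q\<^sub>j) = b k(h)\<close> and \<open>\<alpha>\<^sub>j k(q\<^sub>j) + \<beta>\<^sub>j k(h) = 0\<close>, whence \<open>e k(h) = 0\<close>.  As \<open>e \<noteq> 0\<close>,
  \<open>k\<close> vanishes on \<open>h\<close> and on every \<open>q\<^sub>j\<close>.\<close>

lemma cos_sin_parallel_imp_angle:
  fixes a b c :: real
  assumes "vector [cos a, sin a] = c *\<^sub>R (vector [cos b, sin b] :: real^2)"
  shows "\<exists>i::int. a = b + of_int i * pi"
proof -
  have "cos a = c * cos b" and "sin a = c * sin b"
    using arg_cong[OF assms, of "\<lambda>v. v $ 1"] arg_cong[OF assms, of "\<lambda>v. v $ 2"] by auto
  then have "sin (a - b) = 0" by (simp add: sin_diff)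
  then obtain i :: int where "a - b = of_int i * pi" using sin_zero_iff_int2 by blast
  then show ?thesis by (intro exI[of _ i]) simp
qed

lemma continuous_int_multiples_constant:
  fixes d :: "real \<Rightarrow> real"
  assumes p: "p > 0" and d: "continuous_on UNIV d" and ints: "\<And>t. \<exists>i::int. d t = of_int i * p"
  shows "d s = d t"
proof -
  have "d constant_on UNIV"
  proof (rule continuous_discrete_range_constant[OF connected_UNIV d])
    fix x :: real
    show "\<exists>e>0. \<forall>y. y \<in> UNIV \<and> d y \<noteq> d x \<longrightarrow> e \<le> norm (d y - d x)"
    proof (intro exI[of _ p] conjI allI impI)
      fix y assume "y \<in> UNIV \<and> d y \<noteq> d x"
      moreover obtain i j :: int where ij: "d y = of_int i * p" "d x = of_int j * p"
        using ints by blast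
      ultimately have "i \<noteq> j" by auto
      then have "1 \<le> \<bar>of_int i - of_int j :: real\<bar>" by (simp flip: of_int_diff)
      then have "1 * p \<le> \<bar>of_int i - of_int j :: real\<bar> * p" using p by (intro mult_right_mono) auto
      then show "p \<le> norm (d y - d x)" using p by (simp add: ij abs_mult left_diff_distrib[symmetric])
    qed (use p in simp)
  qed
  then show ?thesis unfolding constant_on_def by auto
qed

lemma periodic_int_multiple:
  fixes f :: "real \<Rightarrow> 'a"
  assumes per: "\<And>t. f (t + p) = f t"
  shows "f (t + of_int i * p) = f t"
proof -
  have nat: "f (s + of_nat m * p) = f s" for s m
  proof (induction m arbitrary: s)
    case (Suc m)
    have "f (s + of_nat (Suc m) * p) = f ((s + p) + of_nat m * p)" by (simp add: algebra_simps)
    also have "\<dots> = f s" using Suc per by simp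
    finally show ?case .
  qed simp
  show ?thesis
  proof (cases "i \<ge> 0")
    case True
    then show ?thesis using nat[of t "nat i"] by simp
  next
    case False
    have "f (t + of_int i * p) = f (t + of_int i * p + of_nat (nat (- i)) * p)" by (rule nat[symmetric])
    also have "\<dots> = f t" using False by (simp add: algebra_simps)
    finally show ?thesis .
  qed
qed

lemma bounded_constant_increment_zero:
  fixes f :: "real \<Rightarrow> real"
  assumes bdd: "bounded (range f)" and inc: "\<And>s. f (s + p) - f s = c"
  shows "c = 0"
proof (rule ccontr)
  assume "c \<noteq> 0"
  obtain B where B: "\<And>s. \<bar>f s\<bar> \<le> B" using bdd by (auto simp: bounded_real)
  have lin: "f (of_nat k * p) = f 0 + of_nat k * c" for k
  proof (induction k)
    case (Suc k)
    have "f (of_nat (Suc k) * p) = f (of_nat k * p + p)" by (simp add: algebra_simps)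
    also have "\<dots> = f (of_nat k * p) + c" using inc[of "of_nat k * p"] by simp
    finally show ?case using Suc by (simp add: algebra_simps)
  qed simp
  obtain k :: nat where k: "real k > 2 * B / \<bar>c\<bar>" using reals_Archimedean2 by blast
  have "real k * \<bar>c\<bar> = \<bar>f (of_nat k * p) - f 0\<bar>" using lin[of k] by (simp add: abs_mult)
  also have "\<dots> \<le> 2 * B" using B[of "of_nat k * p"] B[of 0] by linarith
  finally show False using k \<open>c \<noteq> 0\<close> by (simp add: field_simps)
qed

lemma lifts_mat_direction:
  assumes "lifts_mat A phi"
  obtains r where "r > 0"
    "A *v vector [cos t, sin t] = r *\<^sub>R vector [cos (t + phi t), sin (t + phi t)]"
  using assms unfolding lifts_mat_def by blast

lemma lifts_mat_parallel_images:
  assumes A: "lifts_mat A phi" and B: "lifts_mat B psi"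
    and par: "B *v vector [cos s, sin s] = c *\<^sub>R (A *v vector [cos t, sin t])"
  shows "\<exists>i::int. s + psi s = t + phi t + of_int i * pi"
proof -
  obtain r where r: "r > 0" "A *v vector [cos t, sin t] = r *\<^sub>R vector [cos (t + phi t), sin (t + phi t)]"
    using lifts_mat_direction[OF A] .
  obtain r' where r': "r' > 0" "B *v vector [cos s, sin s] = r' *\<^sub>R vector [cos (s + psi s), sin (s + psi s)]"
    using lifts_mat_direction[OF B] .
  have "r' *\<^sub>R (vector [cos (s + psi s), sin (s + psi s)] :: real^2)
      = (c * r) *\<^sub>R vector [cos (t + phi t), sin (t + phi t)]"
    using par r(2) r'(2) by simp
  then have "vector [cos (s + psi s), sin (s + psi s)]
      = (c * r / r') *\<^sub>R (vector [cos (t + phi t), sin (t + phi t)] :: real^2)"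
    using r'(1) by (auto simp: vec_eq_iff forall_2 field_simps)
  then show ?thesis by (rule cos_sin_parallel_imp_angle)
qed

lemma lifts_mat_periodic:
  assumes A: "lifts_mat A phi"
  shows "phi (t + pi) = phi t"
proof -
  have step: "\<exists>i::int. phi (s + pi) - phi s = of_int i * pi" for s
  proof -
    have "vector [cos (s + pi), sin (s + pi)] = - (vector [cos s, sin s] :: real^2)"
      by (simp add: vec_eq_iff forall_2)
    then have "A *v vector [cos (s + pi), sin (s + pi)] = (-1) *\<^sub>R (A *v vector [cos s, sin s])"
      using matrix_vector_mult_diff_distrib[of A 0 "vector [cos s, sin s] :: real^2"] by simp
    from lifts_mat_parallel_images[OF A A this] obtain i :: int
      where "s + pi + phi (s + pi) = s + phi s + of_int i * pi" by blast
    then have "phi (s + pi) - phi s = of_int (i - 1) * pi" by (simp add: algebra_simps)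
    then show ?thesis by blast
  qed
  have "continuous_on UNIV (\<lambda>s. phi (s + pi) - phi s)"
    by (intro continuous_intros continuous_on_compose2[OF continuous_on_apply_bcontfun]) auto
  from continuous_int_multiples_constant[OF pi_gt_zero this step]
  have increment: "phi (s + pi) - phi s = phi pi - phi 0" for s by (metis add_0)
  then have "phi pi - phi 0 = 0" by (intro bounded_constant_increment_zero[of phi]) auto
  then show ?thesis using increment[of t] by simp
qed

lemma pr_eq_imp_int_pi_shift:
  assumes "phi \<in> carrier SL2t" and "pr phi = pr psi"
  shows "\<exists>i::int. \<forall>t. psi t = phi t + of_int i * pi"
proof -
  obtain A where A: "lifts_mat A phi" using assms(1) by (auto simp: SL2t_def SL2t_carrier_def)
  then have "A \<in> pr phi" by (auto simp: pr_def)
  then obtain B where B: "lifts_mat B psi" "A = B \<or> A = - B" using assms(2) by (auto simp: pr_def)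
  have pointwise: "\<exists>i::int. psi t - phi t = of_int i * pi" for t
  proof -
    have "B *v v = 1 *\<^sub>R (A *v v) \<or> B *v v = (-1) *\<^sub>R (A *v v)" for v :: "real^2"
      using B(2) by (auto simp: vec_eq_iff matrix_vector_mult_def sum_negf)
    then obtain c where "B *v vector [cos t, sin t] = c *\<^sub>R (A *v vector [cos t, sin t])"
      by blast
    from lifts_mat_parallel_images[OF A B(1) this] obtain i :: int
      where "t + psi t = t + phi t + of_int i * pi" by blast
    then show ?thesis by (intro exI[of _ i]) simp
  qed
  have "continuous_on UNIV (\<lambda>t. psi t - phi t)" by (intro continuous_intros) auto
  from continuous_int_multiples_constant[OF pi_gt_zero this pointwise]
  have "psi t - phi t = psi 0 - phi 0" for t .
  moreover obtain i :: int where "psi 0 - phi 0 = of_int i * pi" using pointwise by blast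
  ultimately show ?thesis by (metis add_diff_cancel_left' diff_add_cancel)
qed

lemma apply_SL2t_mult:
  "SL2t_mult phi psi t = psi t + phi (t + psi t)"
proof -
  have "(\<lambda>t. psi t + phi (t + psi t)) \<in> bcontfun"
  proof (rule bcontfun_normI)
    show "continuous_on UNIV (\<lambda>t. psi t + phi (t + psi t))"
      by (intro continuous_intros continuous_on_compose2[OF continuous_on_apply_bcontfun]) auto
    show "norm (psi t + phi (t + psi t)) \<le> norm psi + norm phi" for t
      using norm_bounded[of psi t] norm_bounded[of phi "t + psi t"] norm_triangle_ineq
      by (meson add_mono order_trans)
  qed
  then show ?thesis unfolding SL2t_mult_def by (simp add: Bcontfun_inverse)
qed

lemma SL2t_mult_int_pi_shift:
  fixes phi phi' psi psi' :: "real \<Rightarrow>\<^sub>C real"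
  assumes "phi \<in> carrier SL2t"
    and "\<And>t. phi' t = phi t + of_int i * pi" and "\<And>t. psi' t = psi t + of_int j * pi"
  shows "SL2t_mult phi' psi' t = SL2t_mult phi psi t + of_int (i + j) * pi"
proof -
  obtain A where A: "lifts_mat A phi" using assms(1) by (auto simp: SL2t_def SL2t_carrier_def)
  have "SL2t_mult phi' psi' t = psi t + of_int j * pi + phi (t + (psi t + of_int j * pi)) + of_int i * pi"
    using assms(2,3) by (simp add: apply_SL2t_mult)
  also have "phi (t + (psi t + of_int j * pi)) = phi (t + psi t)"
    using periodic_int_multiple[of phi pi "t + psi t" j, OF lifts_mat_periodic[OF A]]
    by (simp add: add.assoc)
  finally have "SL2t_mult phi' psi' t = psi t + phi (t + psi t) + of_int (i + j) * pi"
    by (simp add: algebra_simps)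
  then show ?thesis by (simp add: apply_SL2t_mult)
qed

definition pi_shift :: "(real \<Rightarrow>\<^sub>C real) \<Rightarrow> (real \<Rightarrow>\<^sub>C real) \<Rightarrow> int" where
  "pi_shift phi psi = (THE i. \<forall>t. psi t = phi t + of_int i * pi)"

lemma pi_shift_eqI:
  fixes phi psi :: "real \<Rightarrow>\<^sub>C real"
  assumes "\<And>t. psi t = phi t + of_int i * pi"
  shows "pi_shift phi psi = i"
  unfolding pi_shift_def
proof (rule the_equality)
  fix i' assume "\<forall>t. psi t = phi t + of_int i' * pi"
  then have "of_int i' * pi = of_int i * pi" using assms[of 0] by simp
  then show "i' = i" by simp
qed (use assms in simp)

lemma pr_eq_imp_pi_shift:
  assumes "phi \<in> carrier SL2t" and "pr phi = pr psi"
  shows "psi t = phi t + of_int (pi_shift phi psi) * pi"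
  using pr_eq_imp_int_pi_shift[OF assms] pi_shift_eqI by metis

lemma pi_shift_additive:
  assumes G: "monoid G" and h: "\<rho> \<in> hom G SL2t" and h': "\<rho>' \<in> hom G SL2t"
    and prs: "\<forall>y\<in>carrier G. pr (\<rho> y) = pr (\<rho>' y)"
    and y: "y \<in> carrier G" and w: "w \<in> carrier G"
  shows "pi_shift (\<rho> (y \<otimes>\<^bsub>G\<^esub> w)) (\<rho>' (y \<otimes>\<^bsub>G\<^esub> w))
       = pi_shift (\<rho> y) (\<rho>' y) + pi_shift (\<rho> w) (\<rho>' w)"
proof (rule pi_shift_eqI)
  fix t
  have "\<rho>' (y \<otimes>\<^bsub>G\<^esub> w) t = SL2t_mult (\<rho>' y) (\<rho>' w) t"
    using hom_mult[OF h' y w] by (simp add: SL2t_def)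
  also have "\<dots> = SL2t_mult (\<rho> y) (\<rho> w) t + of_int (pi_shift (\<rho> y) (\<rho>' y) + pi_shift (\<rho> w) (\<rho>' w)) * pi"
    using hom_in_carrier[OF h] prs y w by (intro SL2t_mult_int_pi_shift pr_eq_imp_pi_shift) auto
  also have "SL2t_mult (\<rho> y) (\<rho> w) = \<rho> (y \<otimes>\<^bsub>G\<^esub> w)"
    using hom_mult[OF h y w] by (simp add: SL2t_def)
  finally show "\<rho>' (y \<otimes>\<^bsub>G\<^esub> w) t = \<rho> (y \<otimes>\<^bsub>G\<^esub> w) t
      + of_int (pi_shift (\<rho> y) (\<rho>' y) + pi_shift (\<rho> w) (\<rho>' w)) * pi" .
qed

definition exponent_sum :: "('a \<Rightarrow> 'b::ab_group_add) \<Rightarrow> ('a \<times> bool) list \<Rightarrow> 'b" where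
  "exponent_sum f w = sum_list (map (\<lambda>(a, s). if s then f a else - f a) w)"

lemma exponent_sum_simps [simp]:
  "exponent_sum f [] = 0"
  "exponent_sum f ((a, s) # w) = (if s then f a else - f a) + exponent_sum f w"
  "exponent_sum f (u @ v) = exponent_sum f u + exponent_sum f v"
  by (auto simp: exponent_sum_def)

lemma exponent_sum_concat: "exponent_sum f (concat (map F L)) = (\<Sum>i\<leftarrow>L. exponent_sum f (F i))"
  by (induction L) auto

lemma exponent_sum_comm_word: "exponent_sum f (comm_word a c) = 0"
  by (simp add: comm_word_def)

lemma exponent_sum_Q: "exponent_sum f (map (\<lambda>j. (Q j, True)) [1..<n+1]) = (\<Sum>j=1..n. f (Q j))"
  by (induction n) auto

lemma exponent_sum_hpow: "exponent_sum f (hpow m) = of_int m * f H"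
  by (auto simp: hpow_def exponent_sum_def sum_list_replicate of_nat_nat)

lemma exponent_sum_replicate:
  "exponent_sum f (replicate m (a, s)) = of_nat m * (if s then f a else - f a)"
  by (induction m) (auto simp: algebra_simps)

lemma eval_word_closed:
  assumes "group G" and "x ` S \<subseteq> carrier G" and "w \<in> lists (S \<times> UNIV)"
  shows "eval_word G x w \<in> carrier G"
  using assms(3)
  by (induction w)
    (use assms in \<open>auto simp: eval_word_def group.is_monoid monoid.m_closed group.inv_closed\<close>)

lemma additive_one:
  assumes "monoid G"
    and k: "\<And>y w. y \<in> carrier G \<Longrightarrow> w \<in> carrier G \<Longrightarrow> k (y \<otimes>\<^bsub>G\<^esub> w) = k y + k w"
  shows "k \<one>\<^bsub>G\<^esub> = (0::'b::group_add)"
proof -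
  have "k \<one>\<^bsub>G\<^esub> + k \<one>\<^bsub>G\<^esub> = k \<one>\<^bsub>G\<^esub>" using assms by (metis monoid.l_one monoid.one_closed)
  then show ?thesis by (metis add_0 add_right_imp_eq)
qed

lemma additive_inv:
  assumes G: "group G" and y: "y \<in> carrier G"
    and k: "\<And>y w. y \<in> carrier G \<Longrightarrow> w \<in> carrier G \<Longrightarrow> k (y \<otimes>\<^bsub>G\<^esub> w) = k y + k w"
  shows "k (inv\<^bsub>G\<^esub> y) = - (k y :: 'b::group_add)"
proof -
  have "k y + k (inv\<^bsub>G\<^esub> y) = k \<one>\<^bsub>G\<^esub>"
    using k[of y "inv\<^bsub>G\<^esub> y"] G y by (simp add: group.inv_closed group.r_inv)
  also have "\<dots> = 0" using additive_one[OF group.is_monoid[OF G] k] by simp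
  finally show ?thesis by (simp add: add_eq_0_iff2)
qed

lemma additive_eval_word:
  assumes G: "group G" and x: "x ` S \<subseteq> carrier G"
    and k: "\<And>y w. y \<in> carrier G \<Longrightarrow> w \<in> carrier G \<Longrightarrow> k (y \<otimes>\<^bsub>G\<^esub> w) = k y + k w"
  shows "w \<in> lists (S \<times> UNIV) \<Longrightarrow> k (eval_word G x w) = exponent_sum (k \<circ> x) w"
proof (induction w)
  case Nil
  show ?case using additive_one[OF group.is_monoid[OF G] k] by (simp add: eval_word_def)
next
  case (Cons p w)
  obtain a s where p: "p = (a, s)" by (cases p)
  have a: "x a \<in> carrier G" and wS: "w \<in> lists (S \<times> UNIV)" using Cons.prems p x by auto
  have "eval_word G x (p # w) = (if s then x a else inv\<^bsub>G\<^esub> (x a)) \<otimes>\<^bsub>G\<^esub> eval_word G x w"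
    by (simp add: eval_word_def p)
  moreover have "(if s then x a else inv\<^bsub>G\<^esub> (x a)) \<in> carrier G" using G a by (simp add: group.inv_closed)
  ultimately have "k (eval_word G x (p # w)) = k (if s then x a else inv\<^bsub>G\<^esub> (x a)) + k (eval_word G x w)"
    using k eval_word_closed[OF G x wS] by simp
  then show ?case using Cons.IH[OF wS] additive_inv[OF G a k] by (simp add: p)
qed

lemma presented_by_relator_exponent_sum:
  assumes pres: "presented_by G S R x"
    and k: "\<And>y w. y \<in> carrier G \<Longrightarrow> w \<in> carrier G \<Longrightarrow> k (y \<otimes>\<^bsub>G\<^esub> w) = k y + k w"
    and r: "r \<in> R" "r \<in> lists (S \<times> UNIV)"
  shows "exponent_sum (k \<circ> x) r = (0::'b::ab_group_add)"
proof -
  have G: "group G" and x: "x ` S \<subseteq> carrier G" using pres by (auto simp: presented_by_def)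
  have "word_eqv S R ([] @ r @ []) ([] @ [])" by (rule word_eqv.rel[OF r(1)])
  then have "eval_word G x r = eval_word G x []" using pres r(2) by (auto simp: presented_by_def)
  then show ?thesis
    using additive_eval_word[OF G x k r(2)] additive_eval_word[OF G x k, of "[]"] by simp
qed

text \<open>The relation matrix of the \<open>q\<^sub>j\<close> and \<open>h\<close> in \<open>H\<^sub>1(\<pi>; \<real>)\<close> has determinant
  \<open>\<plusminus> e \<Prod>\<^sub>j \<alpha>\<^sub>j\<close>.\<close>

lemma seifert_relations_trivial_solution:
  fixes kh :: real and kq :: "nat \<Rightarrow> real"
  assumes e: "euler_number b n \<alpha> \<beta> \<noteq> 0"
    and \<alpha>: "\<And>j. 1 \<le> j \<Longrightarrow> j \<le> n \<Longrightarrow> \<alpha> j \<noteq> 0"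
    and sum: "(\<Sum>j=1..n. kq j) - of_int b * kh = 0"
    and fibre: "\<And>j. 1 \<le> j \<Longrightarrow> j \<le> n \<Longrightarrow> of_int (\<alpha> j) * kq j + of_int (\<beta> j) * kh = 0"
  shows "kh = 0" and "\<And>j. 1 \<le> j \<Longrightarrow> j \<le> n \<Longrightarrow> kq j = 0"
proof -
  have q: "kq j = - (of_int (\<beta> j) / of_int (\<alpha> j)) * kh" if "j \<in> {1..n}" for j
    using fibre[of j] \<alpha>[of j] that by (auto simp: field_simps)
  have "(\<Sum>j=1..n. kq j) = (\<Sum>j=1..n. - (of_int (\<beta> j) / of_int (\<alpha> j)) * kh)"
    using q by (rule sum.cong[OF HOL.refl])
  also have "\<dots> = - (\<Sum>j=1..n. of_int (\<beta> j) / of_int (\<alpha> j)) * kh"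
    by (simp add: sum_distrib_right sum_negf)
  finally have "euler_number b n \<alpha> \<beta> * kh = (\<Sum>j=1..n. kq j) - of_int b * kh"
    unfolding euler_number_def by (simp add: algebra_simps)
  then show kh: "kh = 0" using e sum by simp
  show "kq j = 0" if "1 \<le> j" "j \<le> n" for j using q[of j] kh that by simp
qed

lemma seifert_additive_vanishes:
  assumes norm: "normalised_seifert n \<alpha> \<beta>"
    and e: "euler_number b n \<alpha> \<beta> \<noteq> 0"
    and pres: "presented_by G (seif_gens g n) (seif_relators g b n \<alpha> \<beta>) x"
    and k: "\<And>y w. y \<in> carrier G \<Longrightarrow> w \<in> carrier G \<Longrightarrow> k (y \<otimes>\<^bsub>G\<^esub> w) = k y + k w"
  shows "k (x H) = (0::real)" and "\<And>j. 1 \<le> j \<Longrightarrow> j \<le> n \<Longrightarrow> k (x (Q j)) = 0"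
proof -
  let ?S = "seif_gens g n" and ?R = "seif_relators g b n \<alpha> \<beta>"
  have \<alpha>\<beta>: "\<alpha> j > 0" "\<beta> j > 0" if "1 \<le> j" "j \<le> n" for j
    using norm that unfolding normalised_seifert_def by auto
  let ?r = "concat (map (\<lambda>i. comm_word (U i) (V i)) [1..<g+1]) @ map (\<lambda>j. (Q j, True)) [1..<n+1] @ hpow (- b)"
  have "?r \<in> ?R" "?r \<in> lists (?S \<times> UNIV)"
    by (auto simp: seif_relators_def seif_gens_def comm_word_def hpow_def)
  from presented_by_relator_exponent_sum[OF pres k this]
  have sum: "(\<Sum>j=1..n. k (x (Q j))) - of_int b * k (x H) = 0"
    by (simp only: exponent_sum_simps exponent_sum_concat exponent_sum_comm_word exponent_sum_Q
        exponent_sum_hpow) simp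
  have fibre: "of_int (\<alpha> j) * k (x (Q j)) + of_int (\<beta> j) * k (x H) = 0" if j: "1 \<le> j" "j \<le> n" for j
  proof -
    let ?r = "replicate (nat (\<alpha> j)) (Q j, True) @ hpow (\<beta> j)"
    have "?r \<in> ?R" "?r \<in> lists (?S \<times> UNIV)"
      using j by (auto simp: seif_relators_def seif_gens_def hpow_def)
    from presented_by_relator_exponent_sum[OF pres k this]
    show ?thesis using \<alpha>\<beta>[OF j] by (simp add: exponent_sum_replicate exponent_sum_hpow)
  qed
  have "\<alpha> j \<noteq> 0" if "1 \<le> j" "j \<le> n" for j using \<alpha>\<beta>[OF that] by simp
  from seifert_relations_trivial_solution[OF e this sum fibre]
  show "k (x H) = 0" "\<And>j. 1 \<le> j \<Longrightarrow> j \<le> n \<Longrightarrow> k (x (Q j)) = 0" by auto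
qed

theorem lemma4:
  fixes G :: "('g, 'm) monoid_scheme" and x :: "sgen \<Rightarrow> 'g"
    and g n :: nat and b :: int and \<alpha> \<beta> :: "nat \<Rightarrow> int"
    and \<rho> \<rho>' :: "'g \<Rightarrow> (real \<Rightarrow>\<^sub>C real)"
  assumes norm: "normalised_seifert n \<alpha> \<beta>"
    and e: "euler_number b n \<alpha> \<beta> \<noteq> 0"
    and pres: "presented_by G (seif_gens g n) (seif_relators g b n \<alpha> \<beta>) x"
    and rho: "\<rho> \<in> Rep_dc G" and rho': "\<rho>' \<in> Rep_dc G"
    and prs: "\<forall>y\<in>carrier G. pr (\<rho> y) = pr (\<rho>' y)"
  shows "\<rho> (x H) = \<rho>' (x H) \<and> (\<forall>j. 1 \<le> j \<and> j \<le> n \<longrightarrow> \<rho> (x (Q j)) = \<rho>' (x (Q j)))"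
proof -
  have G: "group G" and xS: "x ` seif_gens g n \<subseteq> carrier G"
    using pres by (auto simp: presented_by_def)
  have h: "\<rho> \<in> hom G SL2t" and h': "\<rho>' \<in> hom G SL2t" using rho rho' by (auto simp: Rep_dc_def)
  define k where "k y = real_of_int (pi_shift (\<rho> y) (\<rho>' y))" for y
  have "k (y \<otimes>\<^bsub>G\<^esub> w) = k y + k w" if "y \<in> carrier G" "w \<in> carrier G" for y w
    using pi_shift_additive[OF group.is_monoid[OF G] h h' prs that] by (simp add: k_def)
  note vanish = seifert_additive_vanishes[OF norm e pres this]
  have eq: "\<rho> (x a) = \<rho>' (x a)" if "a \<in> seif_gens g n" "k (x a) = 0" for a
  proof (rule bcontfun_eqI)
    have "x a \<in> carrier G" using xS that by auto
    then show "\<rho> (x a) t = \<rho>' (x a) t" for t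
      using pr_eq_imp_pi_shift[of "\<rho> (x a)" "\<rho>' (x a)" t] hom_in_carrier[OF h] prs that(2)
      by (simp add: k_def)
  qed
  show ?thesis using eq vanish by (auto simp: seif_gens_def)
qed

end
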